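(* Let $f:U\to H^3$ and $g:U\to S^3_1$ be the dual flat fronts described below and $p\in\Sigma(f)=\Sigma(g)$ a non-degenerate singular point. If the singular curve $\gamma$ passing through $p$ consists of cuspidal edges of $f$ (resp. $g$) and is a line of curvature of $f$ (resp. $g$), then $g$ (resp. $f$) has a cone-like singularity at $p$.
   Context: Let $U\subset\boldsymbol{C}$ be a domain, $\alpha,\beta:U\to\boldsymbol{C}\setminus\{0\}$ holomorphic, $A:U\to SL(2,\boldsymbol{C})$ a solution of $A'=AD$ with $D=\begin{pmatrix}0&\alpha\\ \beta&0\end{pmatrix}$, and, identifying Lorentz–Minkowski 4-space with $2\times2$ Hermitian matrices, $f=AA^*:U\to H^3$ (hyperbolic 3-space) and $g=Ae_3A^*:U\to S^3_1$ (de Sitter 3-space), $e_3=\mathrm{diag}(1,-1)$. These are flat fronts, each the unit normal of the other, with $\Sigma(f)=\Sigma(g)=\{\alpha\overline{\alpha}-\beta\overline{\beta}=0\}$. A curve $\gamma$ is a line of curvature of a frontal $k$ if the first fundamental form applied to $(k\circ\gamma)'$ is parallel to the second fundamental form applied to $(k\circ\gamma)'$. A non-degenerate singular point $p$ of a frontal $k$ is a cone-like singularity if there is a neighborhood $V$ of $p$ such that at every singular point $q\in V$ the null vector field $\eta_q$ (spanning $\ker dk_q$) is tangent to the singular set. *)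

theory Defs
  imports "HOL-Complex_Analysis.Complex_Analysis"
begin

text \<open>C-infinity on a set S (intended for open S): differentiable at every point of S,
  and every directional derivative is again C-infinity on S.\<close>
coinductive smooth_on :: "'a::real_normed_vector set \<Rightarrow> ('a \<Rightarrow> 'b::real_normed_vector) \<Rightarrow> bool"
  for S where
  "(\<forall>x\<in>S. f differentiable (at x)) \<Longrightarrow>
   (\<forall>v. smooth_on S (\<lambda>x. frechet_derivative f (at x) v)) \<Longrightarrow> smooth_on S f"

definition diffeo_on :: "('a::real_normed_vector \<Rightarrow> 'b::real_normed_vector) \<Rightarrow> 'a set \<Rightarrow> bool" where
  "diffeo_on \<phi> V \<longleftrightarrow> open V \<and> open (\<phi> ` V) \<and> inj_on \<phi> V \<and>
     smooth_on V \<phi> \<and> smooth_on (\<phi> ` V) (inv_into V \<phi>)"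

text \<open>A Hermitian matrix [[x0+x3, x1+i x2],[x1-i x2, x0-x3]] is identified with (x0,x1,x2,x3).\<close>
definition herm_to_L4 :: "complex^2^2 \<Rightarrow> real^4" where
  "herm_to_L4 M = vector [Re (M$1$1 + M$2$2) / 2, Re (M$1$2), Im (M$1$2), Re (M$1$1 - M$2$2) / 2]"

definition cadj :: "complex^2^2 \<Rightarrow> complex^2^2" where
  "cadj M = (\<chi> i j. cnj (M $ j $ i))"

definition e3 :: "complex^2^2" where
  "e3 = vector [vector [1, 0], vector [0, -1]]"

definition Dmat :: "complex \<Rightarrow> complex \<Rightarrow> complex^2^2" where
  "Dmat a b = vector [vector [0, a], vector [b, 0]]"

definition fmap :: "(complex \<Rightarrow> complex^2^2) \<Rightarrow> complex \<Rightarrow> real^4" where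
  "fmap A z = herm_to_L4 (A z ** cadj (A z))"

definition gmap :: "(complex \<Rightarrow> complex^2^2) \<Rightarrow> complex \<Rightarrow> real^4" where
  "gmap A z = herm_to_L4 (A z ** e3 ** cadj (A z))"

text \<open>Domain U is identified with R^2 via complex numbers; (u,v) = (Re z, Im z).\<close>

definition sing_set :: "(complex \<Rightarrow> real^4) \<Rightarrow> complex set \<Rightarrow> complex set" where
  "sing_set k U = {q\<in>U. \<not> inj (frechet_derivative k (at q))}"

definition signed_area :: "(complex \<Rightarrow> real^4) \<Rightarrow> (complex \<Rightarrow> real^4) \<Rightarrow> complex \<Rightarrow> real" where
  "signed_area k \<nu> q = det (vector [k q, frechet_derivative k (at q) 1,
                                    frechet_derivative k (at q) \<i>, \<nu> q] :: real^4^4)"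

definition nondeg_sing :: "(complex \<Rightarrow> real^4) \<Rightarrow> (complex \<Rightarrow> real^4) \<Rightarrow> complex set \<Rightarrow> complex \<Rightarrow> bool" where
  "nondeg_sing k \<nu> U p \<longleftrightarrow> p \<in> sing_set k U \<and>
     (\<exists>D. (signed_area k \<nu> has_derivative D) (at p) \<and> D \<noteq> (\<lambda>_. 0))"

definition cusp_std :: "complex \<Rightarrow> real^4" where
  "cusp_std z = vector [Re z, (Im z)^2, (Im z)^3, 0]"

definition cuspidal_edge :: "(complex \<Rightarrow> real^4) \<Rightarrow> complex set \<Rightarrow> complex \<Rightarrow> bool" where
  "cuspidal_edge k U p \<longleftrightarrow>
     (\<exists>V W (\<phi>::complex \<Rightarrow> complex) (\<Phi>::real^4 \<Rightarrow> real^4).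
        p \<in> V \<and> V \<subseteq> U \<and> k p \<in> W \<and> diffeo_on \<phi> V \<and> diffeo_on \<Phi> W \<and>
        \<phi> p = 0 \<and> \<Phi> (k p) = 0 \<and> (\<forall>x\<in>V. k x \<in> W \<and> \<Phi> (k x) = cusp_std (\<phi> x)))"

definition line_of_curvature ::
  "(complex \<Rightarrow> real^4) \<Rightarrow> (complex \<Rightarrow> real^4) \<Rightarrow> (real \<Rightarrow> complex) \<Rightarrow> real set \<Rightarrow> bool" where
  "line_of_curvature k \<nu> \<gamma> I \<longleftrightarrow>
     (\<forall>t\<in>I. \<exists>a b::real. (a, b) \<noteq> (0, 0) \<and>
        a *\<^sub>R vector_derivative (k \<circ> \<gamma>) (at t) + b *\<^sub>R vector_derivative (\<nu> \<circ> \<gamma>) (at t) = 0)"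

definition singular_curve_through ::
  "(complex \<Rightarrow> real^4) \<Rightarrow> complex set \<Rightarrow> complex \<Rightarrow> (real \<Rightarrow> complex) \<Rightarrow> real \<Rightarrow> bool" where
  "singular_curve_through k U p \<gamma> \<epsilon> \<longleftrightarrow> \<epsilon> > 0 \<and> \<gamma> 0 = p \<and>
     smooth_on {-\<epsilon><..<\<epsilon>} \<gamma> \<and> inj_on \<gamma> {-\<epsilon><..<\<epsilon>} \<and>
     (\<forall>t\<in>{-\<epsilon><..<\<epsilon>}. vector_derivative \<gamma> (at t) \<noteq> 0) \<and>
     (\<exists>W. open W \<and> p \<in> W \<and> \<gamma> ` {-\<epsilon><..<\<epsilon>} = sing_set k U \<inter> W)"

definition tangent_to :: "complex set \<Rightarrow> complex \<Rightarrow> complex \<Rightarrow> bool" where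
  "tangent_to S q v \<longleftrightarrow> (\<exists>c e. e > 0 \<and> c 0 = q \<and> (\<forall>t\<in>{-e<..<e}. c t \<in> S) \<and>
                                 (c has_vector_derivative v) (at 0))"

definition cone_like :: "(complex \<Rightarrow> real^4) \<Rightarrow> (complex \<Rightarrow> real^4) \<Rightarrow> complex set \<Rightarrow> complex \<Rightarrow> bool" where
  "cone_like k \<nu> U p \<longleftrightarrow> nondeg_sing k \<nu> U p \<and>
     (\<exists>V. open V \<and> p \<in> V \<and>
        (\<forall>q\<in>V \<inter> sing_set k U. \<forall>\<eta>. frechet_derivative k (at q) \<eta> = 0 \<longrightarrow>
            tangent_to (sing_set k U) q \<eta>))"

end

theory Submission
  imports Defs
begin

(* Write frame_vec A u for the point A X(u) A^* of L^4, where X(u) = [[0, u], [cnj u, 0]].  The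
   differentials of the dual pair are
     df_z h = frame_vec A (alpha h + cnj beta cnj h),   dg_z h = frame_vec A (cnj beta cnj h - alpha h),
   and frame_vec A is injective and real-linear when det A = 1.  Hence z is singular for f iff it
   is singular for g iff |alpha| = |beta|, and the kernels of df and dg are real lines.  Along a
   cuspidal edge of f the velocity w of the singular curve is not in ker df, so writing the
   line-of-curvature condition r df(w) + s dg(w) = 0 and comparing moduli forces r = 0, i.e.
   w spans ker dg: the null direction of g is tangent to the singular set.  Replacing alpha by
   -alpha swaps the roles of f and g. *)

no_notation fps_nth (infixl \<open>$\<close> 75)

lemma vector_4_nth [simp]:
  "(vector [x, y, z, w] :: 'a::zero^4) $ 1 = x"
  "(vector [x, y, z, w] :: 'a::zero^4) $ 2 = y"
  "(vector [x, y, z, w] :: 'a::zero^4) $ 3 = z"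
  "(vector [x, y, z, w] :: 'a::zero^4) $ 4 = w"
  unfolding vector_def by simp_all

lemma matrix_matrix_mult_2_nth:
  "((X :: 'a::semiring_1^2^2) ** Y) $ i $ j = X $ i $ 1 * Y $ 1 $ j + X $ i $ 2 * Y $ 2 $ j"
  by (simp add: matrix_matrix_mult_def sum_2)

lemma cadj_nth [simp]: "cadj X $ i $ j = cnj (X $ j $ i)"
  by (simp add: cadj_def)

definition herm_offdiag :: "complex \<Rightarrow> complex^2^2" where
  "herm_offdiag u = vector [vector [0, u], vector [cnj u, 0]]"

definition frame_vec :: "complex^2^2 \<Rightarrow> complex \<Rightarrow> real^4" where
  "frame_vec M u = herm_to_L4 (M ** herm_offdiag u ** cadj M)"

lemma frame_vec_entries:
  "(M ** herm_offdiag u ** cadj M) $ 1 $ 1 = M$1$1 * u * cnj (M$1$2) + M$1$2 * cnj u * cnj (M$1$1)"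
  "(M ** herm_offdiag u ** cadj M) $ 1 $ 2 = M$1$1 * u * cnj (M$2$2) + M$1$2 * cnj u * cnj (M$2$1)"
  "(M ** herm_offdiag u ** cadj M) $ 2 $ 1 = M$2$1 * u * cnj (M$1$2) + M$2$2 * cnj u * cnj (M$1$1)"
  "(M ** herm_offdiag u ** cadj M) $ 2 $ 2 = M$2$1 * u * cnj (M$2$2) + M$2$2 * cnj u * cnj (M$2$1)"
  by (simp_all add: matrix_matrix_mult_2_nth herm_offdiag_def)

lemma frame_vec_real_combination:
  "frame_vec M (of_real r * u + of_real s * w) = r *\<^sub>R frame_vec M u + s *\<^sub>R frame_vec M w"
  by (simp add: frame_vec_def herm_to_L4_def vec_eq_iff forall_4 frame_vec_entries
      algebra_simps add_divide_distrib diff_divide_distrib)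

lemma linear_frame_vec: "linear (frame_vec M)"
  using frame_vec_real_combination[of M 1 _ 1] frame_vec_real_combination[of M _ _ 0]
  by (intro linearI) (simp_all add: scaleR_conv_of_real)

lemma frame_vec_eq_0_iff:
  assumes "det M = 1"
  shows "frame_vec M u = 0 \<longleftrightarrow> u = 0"
proof
  assume "frame_vec M u = 0"
  let ?Y = "M ** herm_offdiag u ** cadj M"
  have herm: "Im (?Y$1$1) = 0" "Im (?Y$2$2) = 0" "?Y$2$1 = cnj (?Y$1$2)"
    by (simp_all add: frame_vec_entries algebra_simps)
  from \<open>frame_vec M u = 0\<close>
  have "Re (?Y$1$1 + ?Y$2$2) = 0" "Re (?Y$1$1 - ?Y$2$2) = 0" "Re (?Y$1$2) = 0" "Im (?Y$1$2) = 0"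
    by (auto simp: frame_vec_def herm_to_L4_def vec_eq_iff forall_4)
  then have Y0: "?Y$1$1 = 0" "?Y$2$2 = 0" "?Y$1$2 = 0" "?Y$2$1 = 0"
    using herm by (auto simp: complex_eq_iff)
  \<comment> \<open>conjugating back by the adjugate of M recovers u\<close>
  have "M$2$2 * ?Y$1$1 * (- cnj (M$2$1)) + M$2$2 * ?Y$1$2 * cnj (M$1$1)
      + (- M$1$2) * ?Y$2$1 * (- cnj (M$2$1)) + (- M$1$2) * ?Y$2$2 * cnj (M$1$1)
      = det M * u * cnj (det M)"
    by (simp add: det_2 frame_vec_entries algebra_simps)
  then show "u = 0" using Y0 assms by simp
qed (simp add: frame_vec_def herm_to_L4_def vec_eq_iff forall_4 frame_vec_entries)

definition lin_antilin :: "complex \<Rightarrow> complex \<Rightarrow> complex \<Rightarrow> complex" where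
  "lin_antilin a b h = a * h + cnj b * cnj h"

lemma linear_lin_antilin: "linear (lin_antilin a b)"
  by (rule linearI) (simp_all add: lin_antilin_def scaleR_conv_of_real algebra_simps)

lemma lin_antilin_uminus_mult_ii: "lin_antilin (- a) b (\<i> * v) = - \<i> * lin_antilin a b v"
  by (simp add: lin_antilin_def algebra_simps)

lemma lin_antilin_kernel_uminus:
  "(\<exists>v. v \<noteq> 0 \<and> lin_antilin a b v = 0) \<longleftrightarrow> (\<exists>v. v \<noteq> 0 \<and> lin_antilin (- a) b v = 0)"
  by (metis lin_antilin_uminus_mult_ii minus_minus mult_eq_0_iff neg_equal_0_iff_equal complex_i_not_zero)

lemma lin_antilin_kernel_norm_eq:
  assumes "v \<noteq> 0" "lin_antilin a b v = 0"
  shows "cmod a = cmod b"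
proof -
  have "a * v = - (cnj b * cnj v)"
    using assms(2) by (simp add: lin_antilin_def eq_neg_iff_add_eq_0)
  then have "cmod a * cmod v = cmod b * cmod v"
    by (metis norm_minus_cancel norm_mult complex_mod_cnj)
  then show ?thesis using assms(1) by simp
qed

lemma lin_antilin_kernel_real_line:
  assumes "a \<noteq> 0" "w \<noteq> 0" "lin_antilin a b w = 0" "lin_antilin a b \<eta> = 0"
  shows "\<exists>c. \<eta> = c *\<^sub>R w"
proof -
  have "cnj b * cnj w = - (a * w)" "cnj b * cnj \<eta> = - (a * \<eta>)"
    using assms(3,4) by (simp_all add: lin_antilin_def add_eq_0_iff)
  then have "(cnj b * a) * (cnj \<eta> * w - \<eta> * cnj w) = 0"
    by (simp add: algebra_simps)
  moreover have "b \<noteq> 0"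
    using assms by (auto simp: lin_antilin_def)
  ultimately have "cnj \<eta> * w = \<eta> * cnj w" using assms(1) by simp
  then have "cnj (\<eta> / w) = \<eta> / w" using assms(2) by (simp add: field_simps)
  then have "of_real (Re (\<eta> / w)) = \<eta> / w" by (simp add: Reals_cnj_iff)
  then show ?thesis using assms(2) by (metis nonzero_eq_divide_eq scaleR_conv_of_real)
qed

lemma lin_antilin_parallel_uminus:
  fixes r s :: real
  assumes "cmod a = cmod b" "a \<noteq> 0" "w \<noteq> 0" "(r, s) \<noteq> (0, 0)"
    and "r *\<^sub>R lin_antilin a b w + s *\<^sub>R lin_antilin (- a) b w = 0"
    and "lin_antilin a b w \<noteq> 0"
  shows "lin_antilin (- a) b w = 0"
proof -
  have "of_real (r - s) * (a * w) = - (of_real (r + s) * (cnj b * cnj w))"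
    using assms(5) by (simp add: lin_antilin_def scaleR_conv_of_real algebra_simps eq_neg_iff_add_eq_0)
  then have "\<bar>r - s\<bar> * (cmod a * cmod w) = \<bar>r + s\<bar> * (cmod a * cmod w)"
    using assms(1) by (metis norm_minus_cancel norm_mult norm_of_real complex_mod_cnj)
  then have "\<bar>r - s\<bar> = \<bar>r + s\<bar>" using assms(2,3) by simp
  then have "(r - s)\<^sup>2 = (r + s)\<^sup>2" by (metis power2_abs)
  then have "r = 0 \<or> s = 0" by (simp add: power2_eq_square algebra_simps)
  then show ?thesis using assms(4-6) by auto
qed

lemma has_derivative_vecI:
  fixes f :: "'a::real_normed_vector \<Rightarrow> 'b::euclidean_space^'n"
  assumes "\<And>i. ((\<lambda>x. f x $ i) has_derivative (\<lambda>h. f' h $ i)) (at a within S)"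
  shows "(f has_derivative f') (at a within S)"
proof (subst has_derivative_componentwise_within, intro ballI)
  fix j :: "'b^'n" assume "j \<in> Basis"
  then obtain i b where j: "j = axis i b" "b \<in> Basis" by (auto simp: Basis_vec_def)
  have "((\<lambda>x. f x $ i \<bullet> b) has_derivative (\<lambda>h. f' h $ i \<bullet> b)) (at a within S)"
    using bounded_linear.has_derivative[OF bounded_linear_inner_left assms[of i]] .
  then show "((\<lambda>x. f x \<bullet> j) has_derivative (\<lambda>x. f' x \<bullet> j)) (at a within S)"
    by (simp add: j inner_axis inner_commute)
qed

lemma has_derivative_sandwich_cadj:
  assumes "\<And>i j. ((\<lambda>w. A w $ i $ j) has_field_derivative D $ i $ j) (at z)"
  shows "((\<lambda>w. A w ** E ** cadj (A w)) has_derivative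
          (\<lambda>h. (\<chi> i j. h * D$i$j) ** E ** cadj (A z) + A z ** E ** cadj (\<chi> i j. h * D$i$j))) (at z)"
proof -
  have "((\<lambda>w. A w $ i $ j) has_derivative (\<lambda>h. D $ i $ j * h)) (at z)" for i j
    using assms[of i j] by (simp add: has_field_derivative_def)
  then have "((\<lambda>w. (A w ** E ** cadj (A w)) $ i $ j) has_derivative
     (\<lambda>h. ((\<chi> i j. h * D$i$j) ** E ** cadj (A z) + A z ** E ** cadj (\<chi> i j. h * D$i$j)) $ i $ j)) (at z)"
    for i j
    unfolding matrix_matrix_mult_2_nth cadj_nth vector_add_component
    by (auto intro!: derivative_eq_intros simp: algebra_simps)
  then show ?thesis by (intro has_derivative_vecI) auto
qed

lemma bounded_linear_herm_to_L4: "bounded_linear herm_to_L4"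
  by (intro linear_conv_bounded_linear[THEN iffD1] linearI)
     (auto simp: herm_to_L4_def vec_eq_iff forall_4 add_divide_distrib diff_divide_distrib algebra_simps)

lemma herm_sandwich_has_derivative:
  assumes "\<And>i j. ((\<lambda>w. A w $ i $ j) has_field_derivative D $ i $ j) (at z)"
    and "\<And>h. (\<chi> i j. h * D$i$j) ** E ** cadj (A z) + A z ** E ** cadj (\<chi> i j. h * D$i$j)
      = A z ** herm_offdiag (L h) ** cadj (A z)"
  shows "((\<lambda>w. herm_to_L4 (A w ** E ** cadj (A w))) has_derivative (\<lambda>h. frame_vec (A z) (L h))) (at z)"
  using bounded_linear.has_derivative[OF bounded_linear_herm_to_L4
      has_derivative_sandwich_cadj[where E = E, OF assms(1)]]
  unfolding assms(2) frame_vec_def .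

lemma fmap_has_derivative:
  assumes "\<forall>i j. ((\<lambda>w. A w $ i $ j) has_field_derivative (A z ** Dmat a b) $ i $ j) (at z)"
  shows "(fmap A has_derivative (\<lambda>h. frame_vec (A z) (lin_antilin a b h))) (at z)"
proof -
  have "((\<lambda>w. herm_to_L4 (A w ** mat 1 ** cadj (A w))) has_derivative
      (\<lambda>h. frame_vec (A z) (lin_antilin a b h))) (at z)"
    by (rule herm_sandwich_has_derivative[OF assms[rule_format]])
       (simp add: vec_eq_iff forall_2 matrix_matrix_mult_2_nth Dmat_def herm_offdiag_def
         lin_antilin_def mat_def algebra_simps)
  then show ?thesis
    by (simp add: fmap_def[abs_def])
qed

lemma gmap_has_derivative:
  assumes "\<forall>i j. ((\<lambda>w. A w $ i $ j) has_field_derivative (A z ** Dmat a b) $ i $ j) (at z)"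
  shows "(gmap A has_derivative (\<lambda>h. frame_vec (A z) (lin_antilin (- a) b h))) (at z)"
  unfolding gmap_def[abs_def]
  by (rule herm_sandwich_has_derivative[OF assms[rule_format]])
     (simp add: vec_eq_iff forall_2 matrix_matrix_mult_2_nth Dmat_def herm_offdiag_def
       lin_antilin_def e3_def algebra_simps)

lemma smooth_on_differentiable: "smooth_on S f \<Longrightarrow> x \<in> S \<Longrightarrow> f differentiable (at x)"
  by (erule smooth_on.cases) auto

lemma has_vector_derivative_chain_at:
  "(g has_vector_derivative w) (at t) \<Longrightarrow> (f has_derivative f') (at (g t))
    \<Longrightarrow> ((f \<circ> g) has_vector_derivative f' w) (at t)"
  using vector_derivative_diff_chain_within[of g w t UNIV f f'] has_derivative_at_withinI by auto

lemma cusp_std_has_derivative: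
  "(cusp_std has_derivative (\<lambda>h. vector [Re h, 2 * Im z * Im h, 3 * (Im z)\<^sup>2 * Im h, 0])) (at z)"
proof (rule has_derivative_vecI)
  fix i :: 4
  show "((\<lambda>x. cusp_std x $ i) has_derivative
      (\<lambda>h. vector [Re h, 2 * Im z * Im h, 3 * (Im z)\<^sup>2 * Im h, 0] $ i)) (at z)"
    using exhaust_4[of i]
    by (elim disjE) (auto simp: cusp_std_def algebra_simps power2_eq_square intro!: derivative_eq_intros)
qed

lemma diffeo_on_derivative_injective:
  assumes "diffeo_on \<phi> V" "x \<in> V" "(\<phi> has_derivative d\<phi>) (at x)" "d\<phi> u = 0"
  shows "u = 0"
proof -
  let ?\<psi> = "inv_into V \<phi>"
  have "open V" "inj_on \<phi> V" "smooth_on (\<phi> ` V) ?\<psi>"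
    using assms(1) by (auto simp: diffeo_on_def)
  then obtain d\<psi> where d\<psi>: "(?\<psi> has_derivative d\<psi>) (at (\<phi> x))"
    using smooth_on_differentiable assms(2) by (meson differentiable_def imageI)
  have "((?\<psi> \<circ> \<phi>) has_derivative d\<psi> \<circ> d\<phi>) (at x)"
    using diff_chain_at[OF assms(3) d\<psi>] .
  moreover have "((?\<psi> \<circ> \<phi>) has_derivative id) (at x)"
    using has_derivative_transform_within_open[OF has_derivative_id \<open>open V\<close> assms(2)]
      \<open>inj_on \<phi> V\<close> by simp
  ultimately have "d\<psi> \<circ> d\<phi> = id"
    by (rule has_derivative_unique)
  then show "u = 0"
    using assms(4) linear_0[OF has_derivative_linear[OF d\<psi>]] by (metis comp_apply id_apply)
qed

lemma cusp_chart_kernel: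
  fixes k :: "complex \<Rightarrow> real^4" and \<phi> :: "complex \<Rightarrow> complex" and \<Phi> :: "real^4 \<Rightarrow> real^4"
  assumes "open V" "x \<in> V" "\<forall>y\<in>V. \<Phi> (k y) = cusp_std (\<phi> y)"
    and "(k has_derivative dk) (at x)" "(\<phi> has_derivative d\<phi>) (at x)"
    and "(\<Phi> has_derivative d\<Phi>) (at (k x))" "dk u = 0"
  shows "Re (d\<phi> u) = 0" "Im (\<phi> x) * Im (d\<phi> u) = 0"
proof -
  let ?dc = "\<lambda>h. vector [Re h, 2 * Im (\<phi> x) * Im h, 3 * (Im (\<phi> x))\<^sup>2 * Im h, 0] :: real^4"
  have "((\<Phi> \<circ> k) has_derivative d\<Phi> \<circ> dk) (at x)"
    using diff_chain_at[OF assms(4,6)] .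
  moreover have "((\<Phi> \<circ> k) has_derivative ?dc \<circ> d\<phi>) (at x)"
  proof (rule has_derivative_transform_within_open[OF _ assms(1,2)])
    show "((cusp_std \<circ> \<phi>) has_derivative ?dc \<circ> d\<phi>) (at x)"
      using diff_chain_at[OF assms(5) cusp_std_has_derivative] .
    show "(cusp_std \<circ> \<phi>) y = (\<Phi> \<circ> k) y" if "y \<in> V" for y
      using assms(3) that by simp
  qed
  ultimately have "d\<Phi> \<circ> dk = ?dc \<circ> d\<phi>"
    by (rule has_derivative_unique)
  then have "d\<Phi> (dk u) = ?dc (d\<phi> u)"
    by (rule comp_eq_dest)
  then have "?dc (d\<phi> u) = 0"
    using assms(7) linear_0[OF has_derivative_linear[OF assms(6)]] by simp
  then show "Re (d\<phi> u) = 0" "Im (\<phi> x) * Im (d\<phi> u) = 0"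
    by (auto simp: vec_eq_iff forall_4)
qed

lemma has_vector_derivative_Im_eq_0:
  assumes "(c has_vector_derivative v) (at t)" "open S" "t \<in> S" "\<forall>s\<in>S. Im (c s) = 0"
  shows "Im v = 0"
proof -
  have "((\<lambda>s. Im (c s)) has_derivative (\<lambda>h. h * Im v)) (at t)"
    using has_derivative_Im[OF assms(1)[unfolded has_vector_derivative_def]] by simp
  then have "((\<lambda>s. 0) has_derivative (\<lambda>h. h * Im v)) (at t)"
    by (rule has_derivative_transform_within_open[OF _ assms(2,3)]) (use assms(4) in simp)
  then have "(\<lambda>h. h * Im v) = (\<lambda>h. 0)"
    using has_derivative_unique has_derivative_const by blast
  then show ?thesis by (metis mult_1)
qed

lemma cuspidal_edge_singular_curve_transversal:
  fixes k :: "complex \<Rightarrow> real^4"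
  assumes ce: "cuspidal_edge k U (\<gamma> t)" and k_diff: "\<forall>x\<in>U. k differentiable (at x)"
    and \<gamma>': "(\<gamma> has_vector_derivative w) (at t)" "w \<noteq> 0"
    and T: "open T" "t \<in> T" "\<gamma> ` T \<subseteq> sing_set k U"
  shows "frechet_derivative k (at (\<gamma> t)) w \<noteq> 0"
proof
  assume k0: "frechet_derivative k (at (\<gamma> t)) w = 0"
  obtain V W and \<phi> :: "complex \<Rightarrow> complex" and \<Phi> :: "real^4 \<Rightarrow> real^4" where
    "\<gamma> t \<in> V" "V \<subseteq> U" "diffeo_on \<phi> V" "diffeo_on \<Phi> W"
    and chart: "\<forall>x\<in>V. k x \<in> W \<and> \<Phi> (k x) = cusp_std (\<phi> x)"
    using ce unfolding cuspidal_edge_def by blast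
  then have "open V" and \<phi>_smooth: "smooth_on V \<phi>" and \<Phi>_smooth: "smooth_on W \<Phi>"
    by (auto simp: diffeo_on_def)
  define d\<phi> where "d\<phi> x = frechet_derivative \<phi> (at x)" for x
  have dk: "(k has_derivative frechet_derivative k (at x)) (at x)" if "x \<in> V" for x
    using k_diff \<open>V \<subseteq> U\<close> that frechet_derivative_works by blast
  have d\<phi>: "(\<phi> has_derivative d\<phi> x) (at x)" if "x \<in> V" for x
    using smooth_on_differentiable[OF \<phi>_smooth that] frechet_derivative_works unfolding d\<phi>_def by blast
  have d\<Phi>: "(\<Phi> has_derivative frechet_derivative \<Phi> (at (k x))) (at (k x))" if "x \<in> V" for x
    using smooth_on_differentiable[OF \<Phi>_smooth] chart that frechet_derivative_works by blast
  have kernel: "Re (d\<phi> x u) = 0 \<and> Im (\<phi> x) * Im (d\<phi> x u) = 0"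
    if "x \<in> V" "frechet_derivative k (at x) u = 0" for x u
    using cusp_chart_kernel[OF \<open>open V\<close> that(1) _ dk d\<phi> d\<Phi>] that chart by blast
  have d\<phi>_inj: "u = 0" if "x \<in> V" "d\<phi> x u = 0" for x u
    using diffeo_on_derivative_injective[OF \<open>diffeo_on \<phi> V\<close> that(1) d\<phi>] that by blast
  have sing_real: "Im (\<phi> x) = 0" if xV: "x \<in> V" and xs: "x \<in> sing_set k U" for x
  proof -
    have "\<not> inj (frechet_derivative k (at x))"
      using xs by (simp add: sing_set_def)
    then obtain u where "u \<noteq> 0" "frechet_derivative k (at x) u = 0"
      using linear_injective_0[OF has_derivative_linear[OF dk[OF xV]]] by auto
    then show ?thesis
      using kernel[of x u] d\<phi>_inj[of x u] xV by (auto simp: complex_eq_iff)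
  qed
  \<comment> \<open>\<open>\<phi> \<circ> \<gamma>\<close> runs along the real axis, so \<open>d\<phi> w\<close> is real; but \<open>w \<in> ker dk\<close> makes it imaginary\<close>
  obtain S where "open S" "t \<in> S" "\<forall>s\<in>S. \<gamma> s \<in> V"
    using continuous_at_open[of t \<gamma>] has_vector_derivative_continuous[OF \<gamma>'(1)]
      \<open>open V\<close> \<open>\<gamma> t \<in> V\<close> by metis
  then have "Im (d\<phi> (\<gamma> t) w) = 0"
    using has_vector_derivative_Im_eq_0[OF has_vector_derivative_chain_at[OF \<gamma>'(1) d\<phi>], of "S \<inter> T"]
      T sing_real \<open>\<gamma> t \<in> V\<close> by auto
  moreover have "Re (d\<phi> (\<gamma> t) w) = 0"
    using kernel[of "\<gamma> t" w] k0 \<open>\<gamma> t \<in> V\<close> by simp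
  ultimately show False
    using d\<phi>_inj[of "\<gamma> t" w] \<open>\<gamma> t \<in> V\<close> \<open>w \<noteq> 0\<close> by (simp add: complex_eq_iff)
qed

lemma tangent_to_scaled_velocity:
  assumes "(\<gamma> has_vector_derivative w) (at t)" "open T" "t \<in> T" "\<gamma> ` T \<subseteq> S"
  shows "tangent_to S (\<gamma> t) (c *\<^sub>R w)"
proof -
  obtain d where "d > 0" "ball t d \<subseteq> T"
    using assms(2,3) openE by blast
  define e where "e = d / (\<bar>c\<bar> + 1)"
  have "e > 0" using \<open>d > 0\<close> by (simp add: e_def add_pos_nonneg)
  have "\<gamma> (t + c * \<tau>) \<in> S" if "\<tau> \<in> {-e<..<e}" for \<tau>
  proof -
    have "\<bar>c * \<tau>\<bar> \<le> \<bar>c\<bar> * e"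
      using that by (auto simp: abs_mult intro!: mult_left_mono)
    also have "\<dots> < d"
      using \<open>d > 0\<close> by (simp add: e_def field_simps)
    finally have "t + c * \<tau> \<in> ball t d"
      by (simp add: dist_real_def)
    then show ?thesis
      using \<open>ball t d \<subseteq> T\<close> assms(4) by blast
  qed
  moreover have "((\<lambda>\<tau>. t + c * \<tau>) has_real_derivative c) (at 0)"
    by (auto intro!: derivative_eq_intros)
  then have "((\<lambda>\<tau>. \<gamma> (t + c * \<tau>)) has_vector_derivative c *\<^sub>R w) (at 0)"
    using vector_diff_chain_at[of "\<lambda>\<tau>. t + c * \<tau>" c 0 \<gamma> w] assms(1)
    by (simp add: o_def has_real_derivative_iff_has_vector_derivative)
  ultimately show ?thesis
    unfolding tangent_to_def using \<open>e > 0\<close> by (intro exI[of _ "\<lambda>\<tau>. \<gamma> (t + c * \<tau>)"] exI[of _ e]) auto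
qed

lemma sing_set_iff_kernel:
  assumes "z \<in> U" "det M = 1" "(k has_derivative (\<lambda>h. frame_vec M (lin_antilin a b h))) (at z)"
  shows "z \<in> sing_set k U \<longleftrightarrow> (\<exists>v. v \<noteq> 0 \<and> lin_antilin a b v = 0)"
proof -
  have "linear (\<lambda>h. frame_vec M (lin_antilin a b h))"
    using linear_compose[OF linear_lin_antilin linear_frame_vec] by (simp add: o_def)
  then have "inj (\<lambda>h. frame_vec M (lin_antilin a b h)) \<longleftrightarrow> (\<forall>v. lin_antilin a b v = 0 \<longrightarrow> v = 0)"
    by (simp add: linear_injective_0 frame_vec_eq_0_iff[OF assms(2)])
  then show ?thesis
    using assms(1) frechet_derivative_at[OF assms(3)] by (auto simp: sing_set_def)
qed

lemma sing_set_dual_eq: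
  assumes det: "\<forall>z\<in>U. det (M z) = 1"
    and dk: "\<forall>z\<in>U. (k has_derivative (\<lambda>h. frame_vec (M z) (lin_antilin (a z) (b z) h))) (at z)"
    and d\<nu>: "\<forall>z\<in>U. (\<nu> has_derivative (\<lambda>h. frame_vec (M z) (lin_antilin (- a z) (b z) h))) (at z)"
  shows "sing_set \<nu> U = sing_set k U"
proof (rule set_eqI)
  fix z
  show "z \<in> sing_set \<nu> U \<longleftrightarrow> z \<in> sing_set k U"
  proof (cases "z \<in> U")
    case True
    then have "det (M z) = 1"
      and dk_z: "(k has_derivative (\<lambda>h. frame_vec (M z) (lin_antilin (a z) (b z) h))) (at z)"
      and d\<nu>_z: "(\<nu> has_derivative (\<lambda>h. frame_vec (M z) (lin_antilin (- a z) (b z) h))) (at z)"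
      using det dk d\<nu> by auto
    then show ?thesis
      using sing_set_iff_kernel[OF True _ dk_z] sing_set_iff_kernel[OF True _ d\<nu>_z]
        lin_antilin_kernel_uminus[of "a z" "b z"] by simp
  qed (simp add: sing_set_def)
qed

lemma line_of_curvature_direction_in_dual_kernel:
  fixes r s :: real
  assumes "a \<noteq> 0" "det M = 1" "cmod a = cmod b"
    and dk: "(k has_derivative (\<lambda>h. frame_vec M (lin_antilin a b h))) (at (\<gamma> t))"
    and d\<nu>: "(\<nu> has_derivative (\<lambda>h. frame_vec M (lin_antilin (- a) b h))) (at (\<gamma> t))"
    and \<gamma>': "(\<gamma> has_vector_derivative w) (at t)"
    and "frechet_derivative k (at (\<gamma> t)) w \<noteq> 0"
    and "(r, s) \<noteq> (0, 0)"
    and "r *\<^sub>R vector_derivative (k \<circ> \<gamma>) (at t) + s *\<^sub>R vector_derivative (\<nu> \<circ> \<gamma>) (at t) = 0"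
  shows "lin_antilin (- a) b w = 0"
proof -
  have "frame_vec M (lin_antilin a b w) \<noteq> 0"
    using assms(7) by (simp add: frechet_derivative_at[OF dk, symmetric])
  then have "lin_antilin a b w \<noteq> 0"
    by (auto simp: linear_0[OF linear_frame_vec])
  then have "w \<noteq> 0"
    by (auto simp: lin_antilin_def)
  have "frame_vec M (r *\<^sub>R lin_antilin a b w + s *\<^sub>R lin_antilin (- a) b w) = 0"
    using assms(9) vector_derivative_at[OF has_vector_derivative_chain_at[OF \<gamma>' dk]]
      vector_derivative_at[OF has_vector_derivative_chain_at[OF \<gamma>' d\<nu>]]
    by (simp add: linear_add[OF linear_frame_vec] linear_scale[OF linear_frame_vec])
  then have "r *\<^sub>R lin_antilin a b w + s *\<^sub>R lin_antilin (- a) b w = 0"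
    using frame_vec_eq_0_iff[OF assms(2)] by blast
  then show ?thesis
    using lin_antilin_parallel_uminus[OF assms(3,1) \<open>w \<noteq> 0\<close> assms(8)] \<open>lin_antilin a b w \<noteq> 0\<close>
    by blast
qed

lemma cone_like_dual_of_cuspidal_line_of_curvature:
  fixes k \<nu> :: "complex \<Rightarrow> real^4" and M :: "complex \<Rightarrow> complex^2^2"
  assumes a: "\<forall>z\<in>U. a z \<noteq> 0" and det: "\<forall>z\<in>U. det (M z) = 1"
    and dk: "\<forall>z\<in>U. (k has_derivative (\<lambda>h. frame_vec (M z) (lin_antilin (a z) (b z) h))) (at z)"
    and d\<nu>: "\<forall>z\<in>U. (\<nu> has_derivative (\<lambda>h. frame_vec (M z) (lin_antilin (- a z) (b z) h))) (at z)"
    and nondeg: "nondeg_sing \<nu> k U p"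
    and curve: "singular_curve_through k U p \<gamma> \<epsilon>"
    and cusp: "\<forall>t\<in>{-\<epsilon><..<\<epsilon>}. cuspidal_edge k U (\<gamma> t)"
    and curvature_line: "line_of_curvature k \<nu> \<gamma> {-\<epsilon><..<\<epsilon>}"
  shows "cone_like \<nu> k U p"
proof -
  define I where "I = {-\<epsilon><..<\<epsilon>}"
  obtain W where "smooth_on I \<gamma>" "\<forall>t\<in>I. vector_derivative \<gamma> (at t) \<noteq> 0"
    and "open W" "p \<in> W" and image: "\<gamma> ` I = sing_set k U \<inter> W"
    using curve unfolding singular_curve_through_def I_def by blast
  have sing_eq: "sing_set \<nu> U = sing_set k U"
    by (rule sing_set_dual_eq[OF det dk d\<nu>])
  have k_diff: "\<forall>x\<in>U. k differentiable (at x)"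
    using dk by (auto simp: differentiable_def)
  have tangent: "tangent_to (sing_set \<nu> U) (\<gamma> t) \<eta>"
    if "t \<in> I" and \<eta>: "frechet_derivative \<nu> (at (\<gamma> t)) \<eta> = 0" for t \<eta>
  proof -
    let ?L = "lin_antilin (a (\<gamma> t)) (b (\<gamma> t))" and ?L' = "lin_antilin (- a (\<gamma> t)) (b (\<gamma> t))"
    have "\<gamma> t \<in> U" "\<gamma> t \<in> sing_set k U"
      using \<open>t \<in> I\<close> image by (auto simp: sing_set_def)
    then have a_t: "a (\<gamma> t) \<noteq> 0" and det_t: "det (M (\<gamma> t)) = 1"
      and dk_t: "(k has_derivative (\<lambda>h. frame_vec (M (\<gamma> t)) (?L h))) (at (\<gamma> t))"
      and d\<nu>_t: "(\<nu> has_derivative (\<lambda>h. frame_vec (M (\<gamma> t)) (?L' h))) (at (\<gamma> t))"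
      using a det dk d\<nu> by auto
    define w where "w = vector_derivative \<gamma> (at t)"
    have \<gamma>': "(\<gamma> has_vector_derivative w) (at t)" and "w \<noteq> 0"
      using smooth_on_differentiable[OF \<open>smooth_on I \<gamma>\<close> \<open>t \<in> I\<close>] vector_derivative_works
        \<open>\<forall>t\<in>I. vector_derivative \<gamma> (at t) \<noteq> 0\<close> \<open>t \<in> I\<close> unfolding w_def by auto
    obtain v where "v \<noteq> 0" "?L v = 0"
      using sing_set_iff_kernel[OF \<open>\<gamma> t \<in> U\<close> det_t dk_t] \<open>\<gamma> t \<in> sing_set k U\<close> by blast
    then have "cmod (a (\<gamma> t)) = cmod (b (\<gamma> t))"
      by (rule lin_antilin_kernel_norm_eq)
    moreover have "frechet_derivative k (at (\<gamma> t)) w \<noteq> 0"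
      using cuspidal_edge_singular_curve_transversal[OF _ k_diff \<gamma>' \<open>w \<noteq> 0\<close>, of I] cusp image
        \<open>t \<in> I\<close> by (auto simp: I_def)
    moreover obtain r s :: real where "(r, s) \<noteq> (0, 0)"
      and "r *\<^sub>R vector_derivative (k \<circ> \<gamma>) (at t) + s *\<^sub>R vector_derivative (\<nu> \<circ> \<gamma>) (at t) = 0"
      using curvature_line \<open>t \<in> I\<close> unfolding line_of_curvature_def I_def by blast
    ultimately have "?L' w = 0"
      by (rule line_of_curvature_direction_in_dual_kernel[OF a_t det_t _ dk_t d\<nu>_t \<gamma>'])
    moreover have "?L' \<eta> = 0"
      using \<eta> frame_vec_eq_0_iff[OF det_t] by (simp add: frechet_derivative_at[OF d\<nu>_t, symmetric])
    ultimately obtain c where "\<eta> = c *\<^sub>R w"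
      using lin_antilin_kernel_real_line[of "- a (\<gamma> t)" w] a_t \<open>w \<noteq> 0\<close> by auto
    then show ?thesis
      using tangent_to_scaled_velocity[OF \<gamma>', of I "sing_set \<nu> U" c] \<open>t \<in> I\<close> image sing_eq
      by (auto simp: I_def)
  qed
  show ?thesis
    unfolding cone_like_def
  proof (intro conjI exI[of _ W] ballI allI impI)
    fix q \<eta>
    assume "q \<in> W \<inter> sing_set \<nu> U" "frechet_derivative \<nu> (at q) \<eta> = 0"
    moreover obtain t where "t \<in> I" "q = \<gamma> t"
      using \<open>q \<in> W \<inter> sing_set \<nu> U\<close> image sing_eq by auto
    ultimately show "tangent_to (sing_set \<nu> U) q \<eta>"
      using tangent by blast
  qed (use nondeg \<open>open W\<close> \<open>p \<in> W\<close> in auto)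
qed

theorem corollary4p3:
  fixes U :: "complex set" and \<alpha> \<beta> :: "complex \<Rightarrow> complex"
    and A :: "complex \<Rightarrow> complex^2^2" and p :: complex
  assumes "open U" and "connected U"
    and "\<alpha> holomorphic_on U" and "\<beta> holomorphic_on U"
    and "\<forall>z\<in>U. \<alpha> z \<noteq> 0 \<and> \<beta> z \<noteq> 0"
    and "\<forall>z\<in>U. det (A z) = 1"
    and "\<forall>z\<in>U. \<forall>i j. ((\<lambda>w. A w $ i $ j) has_field_derivative (A z ** Dmat (\<alpha> z) (\<beta> z)) $ i $ j) (at z)"
    and "nondeg_sing (fmap A) (gmap A) U p"
    and "nondeg_sing (gmap A) (fmap A) U p"
  shows "(\<forall>\<gamma> \<epsilon>. singular_curve_through (fmap A) U p \<gamma> \<epsilon> \<and>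
             (\<forall>t\<in>{-\<epsilon><..<\<epsilon>}. cuspidal_edge (fmap A) U (\<gamma> t)) \<and>
             line_of_curvature (fmap A) (gmap A) \<gamma> {-\<epsilon><..<\<epsilon>}
           \<longrightarrow> cone_like (gmap A) (fmap A) U p)
       \<and> (\<forall>\<gamma> \<epsilon>. singular_curve_through (gmap A) U p \<gamma> \<epsilon> \<and>
             (\<forall>t\<in>{-\<epsilon><..<\<epsilon>}. cuspidal_edge (gmap A) U (\<gamma> t)) \<and>
             line_of_curvature (gmap A) (fmap A) \<gamma> {-\<epsilon><..<\<epsilon>}
           \<longrightarrow> cone_like (fmap A) (gmap A) U p)"
proof -
  have df: "\<forall>z\<in>U. (fmap A has_derivative (\<lambda>h. frame_vec (A z) (lin_antilin (\<alpha> z) (\<beta> z) h))) (at z)"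
    and dg: "\<forall>z\<in>U. (gmap A has_derivative (\<lambda>h. frame_vec (A z) (lin_antilin (- \<alpha> z) (\<beta> z) h))) (at z)"
    using fmap_has_derivative gmap_has_derivative assms(7) by blast+
  show ?thesis
    using cone_like_dual_of_cuspidal_line_of_curvature[of U \<alpha> A "fmap A" \<beta> "gmap A"]
      cone_like_dual_of_cuspidal_line_of_curvature[of U "\<lambda>z. - \<alpha> z" A "gmap A" \<beta> "fmap A"]
      df dg assms(5,6,8,9) by auto
qed

end
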